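(* Let $\mathbb{H}$ be a finite-dimensional complex Hilbert space with $\dim\mathbb{H}\ge2$, let $n\ge2$ and $k\ge1$ be integers, let $|X\rangle\in\mathbb{H}^{\otimes(nk-1)}$ be a known unit vector, let $\tau_1,\dots,\tau_n\in\mathbb{P}_{nk-1}$, let $c_1,\dots,c_n>0$, and let $|\mu\rangle=\sum_{j=1}^n\alpha_j|j\rangle\in\mathbb{C}^n$ be a unit vector. For unit vectors $|\psi_1\rangle,\dots,|\psi_n\rangle\in\mathbb{H}$ and $j=1,\dots,n$ put $|\Psi^j\rangle=\bigotimes_{t=1}^n|\psi_t\rangle^{\otimes k_{jt}}\in\mathbb{H}^{\otimes(nk-1)}$, where $k_{jt}=k$ for $t\ne j$ and $k_{jj}=k-1$. Then there exists a probabilistic quantum transformation $\mathcal{F}_{\tau_1,\dots,\tau_n}$ from $\mathbb{C}^n\otimes\mathbb{H}^{\otimes nk}$ to $\mathbb{H}$, independent of $\mu$ and the $\psi_t$, such that for all unit vectors $|\psi_1\rangle,\dots,|\psi_n\rangle$ with $|\langle X|S_{\tau_j}|\Psi^j\rangle|^2=c_j$ for $j=1,\dots,n$, one has $$\mathcal{F}_{\tau_1,\dots,\tau_n}\Big(\rho_\mu\otimes\bigotimes_{i=1}^n\rho_{\psi_i}^{\otimes k}\Big)=\rho_\varphi,\qquad|\varphi\rangle\propto\sum_{j=1}^n\alpha_je^{i\theta_j}|\psi_j\rangle,\quad e^{i\theta_j}=\frac{\langle X|S_{\tau_j}|\Psi^j\rangle}{|\langle X|S_{\tau_j}|\Psi^j\rangle|}$$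 (the superposition assumed nonzero).
   Context: $\mathbb{P}_{nk-1}$ is the symmetric group on $\{1,\dots,nk-1\}$; for $g\in\mathbb{P}_{nk-1}$, $S_g$ is the unitary on $\mathbb{H}^{\otimes(nk-1)}$ permuting tensor factors according to $g$. For a unit vector $|\psi\rangle$, $\rho_\psi=|\psi\rangle\langle\psi|$; $|\varphi\rangle\propto|\chi\rangle$ means $|\varphi\rangle$ is the normalization of $|\chi\rangle$ up to a global phase. A probabilistic quantum transformation from $\mathbb{H}_1$ to $\mathbb{H}_2$ is a completely positive, trace-non-increasing linear map from operators on $\mathbb{H}_1$ to operators on $\mathbb{H}_2$; $\mathcal{F}(\rho)=\sigma$ for pure states means $\mathcal{F}(\rho)=p\sigma$ for some $p>0$. *)

theory Defs
  imports Complex_Main "HOL-Combinatorics.Permutations" "Jordan_Normal_Form.Matrix"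
begin

text \<open>The Hilbert space H is modelled as C^d (d = dim H). Vectors and operators on
  tensor products are JNF vectors/matrices in the standard Kronecker basis
  (first factor most significant). Tensor factors of H^(m) are indexed 0..m-1.\<close>

definition kron_vec :: "complex vec \<Rightarrow> complex vec \<Rightarrow> complex vec" where
  "kron_vec u v = vec (dim_vec u * dim_vec v) (\<lambda>i. u $ (i div dim_vec v) * v $ (i mod dim_vec v))"

definition kron_mat :: "complex mat \<Rightarrow> complex mat \<Rightarrow> complex mat" where
  "kron_mat A B = mat (dim_row A * dim_row B) (dim_col A * dim_col B)
     (\<lambda>(i,j). A $$ (i div dim_row B, j div dim_col B) * B $$ (i mod dim_row B, j mod dim_col B))"

fun tensor_vecs :: "complex vec list \<Rightarrow> complex vec" where
  "tensor_vecs [] = vec 1 (\<lambda>_. 1)"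
| "tensor_vecs (v # vs) = kron_vec v (tensor_vecs vs)"

fun tensor_mats :: "complex mat list \<Rightarrow> complex mat" where
  "tensor_mats [] = mat 1 1 (\<lambda>_. 1)"
| "tensor_mats (A # As) = kron_mat A (tensor_mats As)"

definition braket :: "complex vec \<Rightarrow> complex vec \<Rightarrow> complex" where
  "braket u v = (\<Sum>i<dim_vec u. cnj (u $ i) * v $ i)"

definition unit_vector :: "nat \<Rightarrow> complex vec \<Rightarrow> bool" where
  "unit_vector N v \<longleftrightarrow> v \<in> carrier_vec N \<and> (\<Sum>i<N. (cmod (v $ i))\<^sup>2) = 1"

definition proj :: "complex vec \<Rightarrow> complex mat" where
  "proj v = mat (dim_vec v) (dim_vec v) (\<lambda>(i,j). v $ i * cnj (v $ j))"

text \<open>Digit p (0-based tensor position, most significant first) of basis index x of (C^d)^(m).\<close>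
definition digit :: "nat \<Rightarrow> nat \<Rightarrow> nat \<Rightarrow> nat \<Rightarrow> nat" where
  "digit d m x p = (x div d ^ (m - 1 - p)) mod d"

text \<open>S_g on (C^d)^(m) for a permutation g of {0..<m}: the tensor factor in position i
  is moved to position g i, i.e. S_g (v_0 \<otimes> ... \<otimes> v_(m-1)) has v_(inv g p) in position p.\<close>
definition perm_op :: "nat \<Rightarrow> nat \<Rightarrow> (nat \<Rightarrow> nat) \<Rightarrow> complex mat" where
  "perm_op d m g = mat (d ^ m) (d ^ m)
     (\<lambda>(x,y). if (\<forall>i<m. digit d m x (g i) = digit d m y i) then 1 else 0)"

definition mat_trace :: "complex mat \<Rightarrow> complex" where
  "mat_trace A = (\<Sum>i<dim_row A. A $$ (i, i))"

definition psd :: "nat \<Rightarrow> complex mat \<Rightarrow> bool" where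
  "psd N A \<longleftrightarrow> A \<in> carrier_mat N N \<and>
     (\<forall>v \<in> carrier_vec N. Im (braket v (A *\<^sub>v v)) = 0 \<and> Re (braket v (A *\<^sub>v v)) \<ge> 0)"

text \<open>Block (a,b) of size N of a matrix, and the map id_m \<otimes> Phi applied blockwise
  (auxiliary system of dimension m as first tensor factor).\<close>
definition block :: "nat \<Rightarrow> complex mat \<Rightarrow> nat \<Rightarrow> nat \<Rightarrow> complex mat" where
  "block N M a b = mat N N (\<lambda>(x,y). M $$ (a * N + x, b * N + y))"

definition ampliate :: "nat \<Rightarrow> nat \<Rightarrow> nat \<Rightarrow> (complex mat \<Rightarrow> complex mat) \<Rightarrow> complex mat \<Rightarrow> complex mat" where
  "ampliate m N1 N2 \<Phi> M = mat (m * N2) (m * N2)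
     (\<lambda>(i,j). \<Phi> (block N1 M (i div N2) (j div N2)) $$ (i mod N2, j mod N2))"

text \<open>Probabilistic quantum transformation from operators on C^N1 to operators on C^N2:
  a linear, completely positive, trace-non-increasing map.\<close>
definition quantum_operation :: "nat \<Rightarrow> nat \<Rightarrow> (complex mat \<Rightarrow> complex mat) \<Rightarrow> bool" where
  "quantum_operation N1 N2 \<Phi> \<longleftrightarrow>
     (\<forall>A \<in> carrier_mat N1 N1. \<Phi> A \<in> carrier_mat N2 N2) \<and>
     (\<forall>A \<in> carrier_mat N1 N1. \<forall>B \<in> carrier_mat N1 N1. \<forall>a b.
        \<Phi> (a \<cdot>\<^sub>m A + b \<cdot>\<^sub>m B) = a \<cdot>\<^sub>m \<Phi> A + b \<cdot>\<^sub>m \<Phi> B) \<and>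
     (\<forall>m. \<forall>M. psd (m * N1) M \<longrightarrow> psd (m * N2) (ampliate m N1 N2 \<Phi> M)) \<and>
     (\<forall>A. psd N1 A \<longrightarrow> Re (mat_trace (\<Phi> A)) \<le> Re (mat_trace A))"

text \<open>|Psi^j\<rangle> = \<otimes>_t |psi_t\<rangle>^(k_jt), k_jt = k for t \<noteq> j, k_jj = k - 1 (indices 0-based).\<close>
definition Psi_state :: "nat \<Rightarrow> nat \<Rightarrow> (nat \<Rightarrow> complex vec) \<Rightarrow> nat \<Rightarrow> complex vec" where
  "Psi_state n k \<psi> j = tensor_vecs (concat (map (\<lambda>t. replicate (if t = j then k - 1 else k) (\<psi> t)) [0..<n]))"

end

theory Submission
  imports Defs
begin

text \<open>A single Kraus operator \<open>K\<close> does the job. On the branch \<open>|j\<rangle> \<otimes> |\<psi>\<^sub>1\<rangle>\<^sup>\<otimes>\<^sup>k \<otimes> \<dots> \<otimes> |\<psi>\<^sub>n\<rangle>\<^sup>\<otimes>\<^sup>k\<close>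
  it keeps one copy of \<open>\<psi>\<^sub>j\<close> as output and contracts the remaining \<open>nk - 1\<close> factors, which
  form \<open>|\<Psi>\<^sup>j\<rangle>\<close>, against \<open>\<langle>X|S\<^sub>\<tau>\<^sub>j\<close>; dividing by \<open>\<surd>c\<^sub>j = |\<langle>X|S\<^sub>\<tau>\<^sub>j|\<Psi>\<^sup>j\<rangle>|\<close> leaves only the
  phase \<open>e\<^sup>i\<^sup>\<theta>\<^sup>j\<close>. By linearity \<open>K\<close> sends the input to \<open>\<Sum>\<^sub>j \<alpha>\<^sub>j e\<^sup>i\<^sup>\<theta>\<^sup>j |\<psi>\<^sub>j\<rangle>\<close>, and \<open>K\<close> depends neither on
  \<open>\<mu>\<close> nor on the \<open>\<psi>\<^sub>t\<close>. Scaled down, \<open>A \<mapsto> K A K\<^sup>\<dagger>\<close> is trace non-increasing, and it is completely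
  positive because its ampliations are again of this form.\<close>

lemma sum_lessThan_mult_nested:
  "(\<Sum>i<(m::nat) * n. f i) = (\<Sum>a<m. \<Sum>b<n. f (a * n + b) :: 'a :: comm_monoid_add)"
proof (induction m)
  case 0 then show ?case by simp
next
  case (Suc m)
  have "(\<Sum>i<Suc m * n. f i) = (\<Sum>i<m * n. f i) + (\<Sum>i\<in>{m * n..<m * n + n}. f i)"
    by (simp add: add.commute sum.atLeastLessThan_concat lessThan_atLeast0
        flip: sum.atLeastLessThan_concat[of 0 "m * n" "m * n + n"])
  also have "(\<Sum>i\<in>{m * n..<m * n + n}. f i) = (\<Sum>b<n. f (m * n + b))"
    using sum.shift_bounds_nat_ivl[of f 0 "m * n" n] by (simp add: lessThan_atLeast0 add.commute)
  finally show ?case using Suc by simp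
qed

lemma mult_add_less_mult: "a < m \<Longrightarrow> r < N \<Longrightarrow> a * N + r < m * (N :: nat)"
  by (metis add_less_cancel_left mult_Suc less_eq_Suc_le mult_le_mono1 order.strict_trans2 add.commute)

lemma sum_if_zero_const: "(\<Sum>x\<in>A. if P then f x else 0) = (if P then sum f A else 0)"
  by simp

lemma braket_mult_mat_vec:
  assumes "v \<in> carrier_vec N" "A \<in> carrier_mat N N"
  shows "braket v (A *\<^sub>v v) = (\<Sum>i<N. \<Sum>j<N. cnj (v $ i) * A $$ (i, j) * v $ j)"
  using assms by (simp add: braket_def scalar_prod_def sum_distrib_left mult.assoc lessThan_atLeast0)

lemma if_zero_distribs:
  fixes a c :: complex
  shows "(if P then a else 0) * c = (if P then a * c else 0)"
    and "c * (if P then a else 0) = (if P then c * a else 0)"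
    and "cnj (if P then a else 0) = (if P then cnj a else 0)"
  by simp_all

lemma braket_mult_mat_vec_of:
  assumes "A \<in> carrier_mat N N"
  shows "braket (vec N f) (A *\<^sub>v vec N f) = (\<Sum>i<N. \<Sum>j<N. cnj (f i) * A $$ (i, j) * f j)"
  by (subst braket_mult_mat_vec[OF _ assms]) auto

lemma braket_mult_mat_two_point_vec:
  assumes "A \<in> carrier_mat N N" "x < N" "y < N" "x \<noteq> y"
  shows "braket (vec N (\<lambda>i. if i = x then 1 else if i = y then b else 0))
      (A *\<^sub>v vec N (\<lambda>i. if i = x then 1 else if i = y then b else 0))
    = A $$ (x, x) + b * A $$ (x, y) + cnj b * A $$ (y, x) + cnj b * b * A $$ (y, y)"
proof -
  have two_deltas: "(\<lambda>i. if i = x then 1 else if i = y then b else 0)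
      = (\<lambda>i. (if i = x then 1 else 0) + (if i = y then b else 0))"
    using assms(4) by auto
  show ?thesis
    unfolding two_deltas braket_mult_mat_vec_of[OF assms(1)]
    by (simp only: complex_cnj_add distrib_right distrib_left sum.distrib if_zero_distribs)
      (use assms in \<open>simp add: sum.delta sum.distrib algebra_simps\<close>)
qed

lemma braket_mult_mat_unit_vec:
  assumes "A \<in> carrier_mat N N" "x < N"
  shows "braket (unit_vec N x) (A *\<^sub>v unit_vec N x) = A $$ (x, x)"
  unfolding unit_vec_def braket_mult_mat_vec_of[OF assms(1)]
  using assms by (simp only: if_zero_distribs sum.delta) simp

lemma psd_quadratic_form:
  assumes "psd N A" "v \<in> carrier_vec N"
  shows "Im (braket v (A *\<^sub>v v)) = 0" "Re (braket v (A *\<^sub>v v)) \<ge> 0"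
  using assms unfolding psd_def by auto

lemma psd_diag:
  assumes "psd N A" "x < N"
  shows "Im (A $$ (x, x)) = 0" "Re (A $$ (x, x)) \<ge> 0"
proof -
  have "A \<in> carrier_mat N N" using assms(1) unfolding psd_def by auto
  then show "Im (A $$ (x, x)) = 0" "Re (A $$ (x, x)) \<ge> 0"
    using psd_quadratic_form[OF assms(1) unit_vec_carrier, of x] braket_mult_mat_unit_vec assms(2)
    by simp_all
qed

lemma psd_hermitian:
  assumes "psd N A" "x < N" "y < N"
  shows "A $$ (y, x) = cnj (A $$ (x, y))"
proof (cases "x = y")
  case True
  then show ?thesis using psd_diag[OF assms(1,2)] by (simp add: complex_eq_iff)
next
  case False
  have A: "A \<in> carrier_mat N N" using assms unfolding psd_def by auto
  let ?v = "\<lambda>b. vec N (\<lambda>i. if i = x then 1 else if i = y then b else 0)"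
  have "Im (A $$ (x, x) + A $$ (x, y) + A $$ (y, x) + A $$ (y, y)) = 0"
    using psd_quadratic_form(1)[OF assms(1), of "?v 1"]
    unfolding braket_mult_mat_two_point_vec[OF A assms(2,3) False] by simp
  moreover have "Im (A $$ (x, x) + \<i> * A $$ (x, y) - \<i> * A $$ (y, x) + A $$ (y, y)) = 0"
    using psd_quadratic_form(1)[OF assms(1), of "?v \<i>"]
    unfolding braket_mult_mat_two_point_vec[OF A assms(2,3) False] by simp
  ultimately show ?thesis
    using psd_diag[OF assms(1,2)] psd_diag[OF assms(1,3)] by (simp add: complex_eq_iff)
qed

lemma psd_offdiag_bound:
  assumes "psd N A" "x < N" "y < N" "x \<noteq> y"
  shows "2 * cmod (A $$ (x, y)) \<le> Re (A $$ (x, x)) + Re (A $$ (y, y))"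
proof (cases "A $$ (x, y) = 0")
  case True
  then show ?thesis using psd_diag[OF assms(1,2)] psd_diag[OF assms(1,3)] by simp
next
  case False
  define a where "a = A $$ (x, y)"
  \<comment> \<open>test the form on \<open>e\<^sub>x + b e\<^sub>y\<close> with the phase \<open>b\<close> chosen to make the cross terms \<open>-2|a|\<close>\<close>
  define b where "b = - cnj a / complex_of_real (cmod a)"
  have A: "A \<in> carrier_mat N N" using assms unfolding psd_def by auto
  have "Re (A $$ (x, x) + b * a + cnj b * cnj a + cnj b * b * A $$ (y, y)) \<ge> 0"
    using psd_quadratic_form(2)[OF assms(1), of "vec N (\<lambda>i. if i = x then 1 else if i = y then b else 0)"]
    unfolding braket_mult_mat_two_point_vec[OF A assms(2-4)] psd_hermitian[OF assms(1-3)] a_def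
    by simp
  moreover have "cmod a \<noteq> 0" using False a_def by simp
  then have "b * a = - cmod a" "cnj b * cnj a = - cmod a" "cnj b * b = 1"
    unfolding b_def by (simp_all add: field_simps complex_norm_square[symmetric] power2_eq_square)
  ultimately show ?thesis unfolding a_def by simp
qed

lemma psd_diag_sum_le_trace:
  assumes "psd N A" "S \<subseteq> {..<N}"
  shows "(\<Sum>i\<in>S. Re (A $$ (i, i))) \<le> Re (mat_trace A)"
proof -
  have "(\<Sum>i\<in>S. Re (A $$ (i, i))) \<le> (\<Sum>i<N. Re (A $$ (i, i)))"
    by (rule sum_mono2) (use assms psd_diag in auto)
  also have "\<dots> = Re (mat_trace A)"
    using assms(1) unfolding psd_def by (auto simp: mat_trace_def)
  finally show ?thesis .
qed

lemma psd_entry_le_trace: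
  assumes "psd N A" "x < N" "y < N"
  shows "cmod (A $$ (x, y)) \<le> Re (mat_trace A)"
proof (cases "x = y")
  case True
  then have "cmod (A $$ (x, y)) = Re (A $$ (x, x))"
    using psd_diag[OF assms(1,2)] by (simp add: cmod_eq_Re)
  then show ?thesis using psd_diag_sum_le_trace[OF assms(1), of "{x}"] assms by simp
next
  case False
  then show ?thesis
    using psd_diag_sum_le_trace[OF assms(1), of "{x, y}"] psd_offdiag_bound[OF assms False]
      psd_diag(2)[OF assms(1,2)] psd_diag(2)[OF assms(1,3)] assms by simp
qed

definition kraus_map :: "nat \<Rightarrow> nat \<Rightarrow> (nat \<Rightarrow> nat \<Rightarrow> complex) \<Rightarrow> complex mat \<Rightarrow> complex mat" where
  "kraus_map N1 N2 K A = mat N2 N2 (\<lambda>(r, s). \<Sum>x<N1. \<Sum>y<N1. K r x * A $$ (x, y) * cnj (K s y))"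

lemma kraus_map_carrier: "kraus_map N1 N2 K A \<in> carrier_mat N2 N2"
  by (simp add: kraus_map_def)

lemma kraus_map_linear:
  assumes "A \<in> carrier_mat N1 N1" "B \<in> carrier_mat N1 N1"
  shows "kraus_map N1 N2 K (a \<cdot>\<^sub>m A + b \<cdot>\<^sub>m B) = a \<cdot>\<^sub>m kraus_map N1 N2 K A + b \<cdot>\<^sub>m kraus_map N1 N2 K B"
proof (rule eq_matI)
  fix r s assume "r < dim_row (a \<cdot>\<^sub>m kraus_map N1 N2 K A + b \<cdot>\<^sub>m kraus_map N1 N2 K B)"
    "s < dim_col (a \<cdot>\<^sub>m kraus_map N1 N2 K A + b \<cdot>\<^sub>m kraus_map N1 N2 K B)"
  moreover have "(\<Sum>x<N1. \<Sum>y<N1. K r x * (a \<cdot>\<^sub>m A + b \<cdot>\<^sub>m B) $$ (x, y) * cnj (K s y))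
      = (\<Sum>x<N1. \<Sum>y<N1. a * (K r x * A $$ (x, y) * cnj (K s y)) + b * (K r x * B $$ (x, y) * cnj (K s y)))"
    using assms by (intro sum.cong refl) (auto simp: algebra_simps)
  ultimately show "kraus_map N1 N2 K (a \<cdot>\<^sub>m A + b \<cdot>\<^sub>m B) $$ (r, s)
      = (a \<cdot>\<^sub>m kraus_map N1 N2 K A + b \<cdot>\<^sub>m kraus_map N1 N2 K B) $$ (r, s)"
    by (simp add: kraus_map_def sum.distrib sum_distrib_left)
qed (auto simp: kraus_map_def)

lemma psd_kraus_map:
  assumes "psd N1 A"
  shows "psd N2 (kraus_map N1 N2 K A)"
  unfolding psd_def
proof (intro conjI ballI kraus_map_carrier)
  fix v :: "complex vec" assume v: "v \<in> carrier_vec N2"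
  have A: "A \<in> carrier_mat N1 N1" using assms unfolding psd_def by auto
  \<comment> \<open>\<open>\<langle>v|K A K\<^sup>\<dagger> v\<rangle> = \<langle>w|A w\<rangle>\<close> with \<open>w = K\<^sup>\<dagger> v\<close>\<close>
  define w where "w = vec N1 (\<lambda>x. \<Sum>r<N2. cnj (K r x) * v $ r)"
  define T where "T r s x y = cnj (v $ r) * K r x * A $$ (x, y) * cnj (K s y) * v $ s" for r s x y
  have "braket v (kraus_map N1 N2 K A *\<^sub>v v) = (\<Sum>r<N2. \<Sum>s<N2. \<Sum>x<N1. \<Sum>y<N1. T r s x y)"
    unfolding braket_mult_mat_vec[OF v kraus_map_carrier]
    by (simp add: kraus_map_def T_def sum_distrib_left sum_distrib_right mult.assoc)
  also have "\<dots> = (\<Sum>x<N1. \<Sum>y<N1. \<Sum>r<N2. \<Sum>s<N2. T r s x y)"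
  proof -
    have swap_inner: "(\<Sum>s<N2. \<Sum>x<N1. \<Sum>y<N1. T r s x y) = (\<Sum>x<N1. \<Sum>y<N1. \<Sum>s<N2. T r s x y)" for r
      by (subst sum.swap) (rule sum.cong[OF refl], rule sum.swap)
    show ?thesis
      unfolding swap_inner by (subst sum.swap) (rule sum.cong[OF refl], rule sum.swap)
  qed
  also have "\<dots> = braket w (A *\<^sub>v w)"
    unfolding w_def braket_mult_mat_vec_of[OF A]
    by (simp add: T_def cnj_sum sum_distrib_left sum_distrib_right mult.commute mult.left_commute)
  finally have "braket v (kraus_map N1 N2 K A *\<^sub>v v) = braket w (A *\<^sub>v w)" .
  then show "Im (braket v (kraus_map N1 N2 K A *\<^sub>v v)) = 0"
    and "Re (braket v (kraus_map N1 N2 K A *\<^sub>v v)) \<ge> 0"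
    using psd_quadratic_form[OF assms, of w] by (simp_all add: w_def)
qed

definition id_kron_kernel :: "nat \<Rightarrow> nat \<Rightarrow> (nat \<Rightarrow> nat \<Rightarrow> complex) \<Rightarrow> nat \<Rightarrow> nat \<Rightarrow> complex" where
  "id_kron_kernel N1 N2 K i l = (if i div N2 = l div N1 then K (i mod N2) (l mod N1) else 0)"

lemma ampliate_kraus_map:
  "ampliate m N1 N2 (kraus_map N1 N2 K) M
    = kraus_map (m * N1) (m * N2) (id_kron_kernel N1 N2 K) M"
proof (rule eq_matI)
  fix i j assume "i < dim_row (kraus_map (m * N1) (m * N2) (id_kron_kernel N1 N2 K) M)"
    "j < dim_col (kraus_map (m * N1) (m * N2) (id_kron_kernel N1 N2 K) M)"
  then have ij: "i < m * N2" "j < m * N2" by (simp_all add: kraus_map_def)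
  moreover have "N2 > 0" using ij by (cases N2) auto
  ultimately have idx: "i div N2 < m" "j div N2 < m" "i mod N2 < N2" "j mod N2 < N2"
    by (auto simp: less_mult_imp_div_less)
  have "(\<Sum>l<m * N1. \<Sum>l'<m * N1. id_kron_kernel N1 N2 K i l * M $$ (l, l') * cnj (id_kron_kernel N1 N2 K j l'))
      = (\<Sum>a<m. \<Sum>x<N1. \<Sum>b<m. \<Sum>y<N1. (if i div N2 = a then K (i mod N2) x else 0) * M $$ (a * N1 + x, b * N1 + y)
          * cnj (if j div N2 = b then K (j mod N2) y else 0))"
    unfolding sum_lessThan_mult_nested by (intro sum.cong refl) (auto simp: id_kron_kernel_def)
  also have "\<dots> = (\<Sum>x<N1. \<Sum>y<N1. K (i mod N2) x * M $$ (i div N2 * N1 + x, j div N2 * N1 + y)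
          * cnj (K (j mod N2) y))"
    using idx by (simp only: if_zero_distribs sum_if_zero_const sum.delta' finite_lessThan) simp
  also have "\<dots> = ampliate m N1 N2 (kraus_map N1 N2 K) M $$ (i, j)"
    using ij idx by (simp add: ampliate_def kraus_map_def block_def)
  finally show "ampliate m N1 N2 (kraus_map N1 N2 K) M $$ (i, j)
    = kraus_map (m * N1) (m * N2) (id_kron_kernel N1 N2 K) M $$ (i, j)"
    using ij by (simp add: kraus_map_def)
qed (simp_all add: ampliate_def kraus_map_def)

lemma kraus_map_trace_le:
  assumes "psd N1 A" "(\<Sum>r<N2. (\<Sum>x<N1. cmod (K r x))\<^sup>2) \<le> 1"
  shows "Re (mat_trace (kraus_map N1 N2 K A)) \<le> Re (mat_trace A)"
proof -
  let ?t = "Re (mat_trace A)"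
  have "Re (mat_trace (kraus_map N1 N2 K A)) = (\<Sum>r<N2. Re (\<Sum>x<N1. \<Sum>y<N1. K r x * A $$ (x, y) * cnj (K r y)))"
    by (simp add: mat_trace_def kraus_map_def)
  also have "\<dots> \<le> (\<Sum>r<N2. \<Sum>x<N1. \<Sum>y<N1. cmod (K r x) * cmod (K r y) * ?t)"
  proof (rule sum_mono)
    fix r
    have "Re (\<Sum>x<N1. \<Sum>y<N1. K r x * A $$ (x, y) * cnj (K r y))
        \<le> (\<Sum>x<N1. \<Sum>y<N1. cmod (K r x * A $$ (x, y) * cnj (K r y)))"
      by (rule order_trans[OF complex_Re_le_cmod order_trans[OF norm_sum sum_mono[OF norm_sum]]])
    also have "\<dots> \<le> (\<Sum>x<N1. \<Sum>y<N1. cmod (K r x) * cmod (K r y) * ?t)"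
    proof (intro sum_mono)
      fix x y assume "x \<in> {..<N1}" "y \<in> {..<N1}"
      then have "cmod (K r x) * cmod (K r y) * cmod (A $$ (x, y)) \<le> cmod (K r x) * cmod (K r y) * ?t"
        using psd_entry_le_trace[OF assms(1)] by (simp add: mult_left_mono)
      then show "cmod (K r x * A $$ (x, y) * cnj (K r y)) \<le> cmod (K r x) * cmod (K r y) * ?t"
        by (simp add: norm_mult algebra_simps)
    qed
    finally show "Re (\<Sum>x<N1. \<Sum>y<N1. K r x * A $$ (x, y) * cnj (K r y))
        \<le> (\<Sum>x<N1. \<Sum>y<N1. cmod (K r x) * cmod (K r y) * ?t)" .
  qed
  also have "\<dots> = (\<Sum>r<N2. (\<Sum>x<N1. cmod (K r x))\<^sup>2) * ?t"
    by (simp add: power2_eq_square sum_distrib_left sum_distrib_right mult.commute mult.left_commute)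
  also have "\<dots> \<le> ?t"
    using mult_right_mono[OF assms(2)] psd_diag_sum_le_trace[OF assms(1), of "{}"] by simp
  finally show ?thesis .
qed

lemma quantum_operation_kraus_map:
  assumes "(\<Sum>r<N2. (\<Sum>x<N1. cmod (K r x))\<^sup>2) \<le> 1"
  shows "quantum_operation N1 N2 (kraus_map N1 N2 K)"
  unfolding quantum_operation_def ampliate_kraus_map
  using kraus_map_carrier kraus_map_linear psd_kraus_map kraus_map_trace_le[OF _ assms] by blast

lemma kraus_kernel_rescale: "\<exists>\<epsilon> > 0. (\<Sum>r<N2. (\<Sum>x<N1. cmod (complex_of_real \<epsilon> * K r x))\<^sup>2) \<le> 1"
proof -
  define C where "C = (\<Sum>r<N2. (\<Sum>x<N1. cmod (K r x))\<^sup>2)"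
  define \<epsilon> where "\<epsilon> = 1 / sqrt (C + 1)"
  have "C \<ge> 0" by (simp add: C_def sum_nonneg)
  then have "\<epsilon> > 0" "\<epsilon>\<^sup>2 * C \<le> 1" by (simp_all add: \<epsilon>_def power_divide)
  moreover have "(\<Sum>r<N2. (\<Sum>x<N1. cmod (complex_of_real \<epsilon> * K r x))\<^sup>2) = \<epsilon>\<^sup>2 * C"
    using \<open>\<epsilon> > 0\<close> by (simp add: C_def norm_mult power_mult_distrib flip: sum_distrib_left)
  ultimately show ?thesis by metis
qed

lemma kraus_map_proj:
  assumes "dim_vec u = N1"
  shows "kraus_map N1 N2 K (proj u) = proj (vec N2 (\<lambda>r. \<Sum>x<N1. K r x * u $ x))"
proof (rule eq_matI)
  fix r s assume "r < dim_row (proj (vec N2 (\<lambda>r. \<Sum>x<N1. K r x * u $ x)))"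
    "s < dim_col (proj (vec N2 (\<lambda>r. \<Sum>x<N1. K r x * u $ x)))"
  moreover have "(\<Sum>x<N1. \<Sum>y<N1. K r x * proj u $$ (x, y) * cnj (K s y))
      = (\<Sum>x<N1. K r x * u $ x) * cnj (\<Sum>y<N1. K s y * u $ y)"
    using assms by (simp add: proj_def sum_product cnj_sum mult_ac)
  ultimately show "kraus_map N1 N2 K (proj u) $$ (r, s) = proj (vec N2 (\<lambda>r. \<Sum>x<N1. K r x * u $ x)) $$ (r, s)"
    by (simp add: kraus_map_def proj_def)
qed (simp_all add: kraus_map_def proj_def)

lemma dim_tensor_vecs: "dim_vec (tensor_vecs L) = prod_list (map dim_vec L)"
  by (induction L) (auto simp: kron_vec_def)

lemma dim_tensor_vecs_uniform: "\<forall>v\<in>set L. dim_vec v = d \<Longrightarrow> dim_vec (tensor_vecs L) = d ^ length L"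
  by (induction L) (auto simp: kron_vec_def)

lemma tensor_vecs_append:
  assumes "i < dim_vec (tensor_vecs A) * dim_vec (tensor_vecs B)"
  shows "tensor_vecs (A @ B) $ i
    = tensor_vecs A $ (i div dim_vec (tensor_vecs B)) * tensor_vecs B $ (i mod dim_vec (tensor_vecs B))"
  using assms
proof (induction A arbitrary: i)
  case Nil then show ?case by simp
next
  case (Cons a A)
  let ?dA = "dim_vec (tensor_vecs A)" and ?dB = "dim_vec (tensor_vecs B)"
  have i: "i < dim_vec a * (?dA * ?dB)" using Cons.prems by (simp add: kron_vec_def mult.assoc)
  then have pos: "?dA * ?dB > 0" by (cases "?dA * ?dB") auto
  have "tensor_vecs ((a # A) @ B) $ i = a $ (i div (?dA * ?dB)) * tensor_vecs (A @ B) $ (i mod (?dA * ?dB))"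
    using i by (simp add: kron_vec_def dim_tensor_vecs)
  also have "\<dots> = a $ (i div (?dA * ?dB))
      * (tensor_vecs A $ (i mod (?dA * ?dB) div ?dB) * tensor_vecs B $ (i mod (?dA * ?dB) mod ?dB))"
    using Cons.IH pos by simp
  also have "i mod (?dA * ?dB) mod ?dB = i mod ?dB" by (simp add: mod_mod_cancel)
  also have "i mod (?dA * ?dB) div ?dB = (i div ?dB) mod ?dA"
  proof -
    have "i mod (?dB * ?dA) = ?dB * (i div ?dB mod ?dA) + i mod ?dB" by (rule mod_mult2_eq)
    moreover have "(b * q + r mod b) div b = q" if "0 < b" for b q r :: nat
      using that by simp
    ultimately show ?thesis using pos by (metis mult.commute nat_0_less_mult_iff)
  qed
  also have "i div (?dA * ?dB) = i div ?dB div ?dA" by (metis div_mult2_eq mult.commute)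
  moreover have "tensor_vecs (a # A) $ (i div ?dB) = a $ (i div ?dB div ?dA) * tensor_vecs A $ (i div ?dB mod ?dA)"
    using i pos by (simp add: kron_vec_def div_less_iff_less_mult mult.assoc)
  ultimately show ?case by (simp add: mult.assoc)
qed

lemma kron_mat_proj: "kron_mat (proj a) (proj b) = proj (kron_vec a b)"
proof (rule eq_matI)
  fix i j assume "i < dim_row (proj (kron_vec a b))" "j < dim_col (proj (kron_vec a b))"
  then have ij: "i < dim_vec a * dim_vec b" "j < dim_vec a * dim_vec b"
    by (auto simp: proj_def kron_vec_def)
  then have "dim_vec b > 0" by (cases "dim_vec b") auto
  with ij show "kron_mat (proj a) (proj b) $$ (i, j) = proj (kron_vec a b) $$ (i, j)"
    by (simp add: kron_mat_def proj_def kron_vec_def less_mult_imp_div_less)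
qed (auto simp: kron_mat_def proj_def kron_vec_def)

lemma tensor_mats_map_proj: "tensor_mats (map proj L) = proj (tensor_vecs L)"
proof (induction L)
  case Nil then show ?case by (auto simp: proj_def intro!: eq_matI)
next
  case (Cons a L) then show ?case by (simp add: kron_mat_proj)
qed

lemma proj_smult: "proj (c \<cdot>\<^sub>v v) = (c * cnj c) \<cdot>\<^sub>m proj v"
  by (rule eq_matI) (auto simp: proj_def)

text \<open>A basis index \<open>x\<close> of \<open>\<complex>\<^sup>a \<otimes> \<complex>\<^sup>d \<otimes> \<complex>\<^sup>b\<close> has digits \<open>(x div (d b), x mod (d b) div b, x mod b)\<close>;
  \<open>slot_contract d b w\<close> outputs the middle digit and contracts the outer two with the bra \<open>w\<close>.\<close>

definition slot_contract :: "nat \<Rightarrow> nat \<Rightarrow> (nat \<Rightarrow> complex) \<Rightarrow> nat \<Rightarrow> nat \<Rightarrow> complex" where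
  "slot_contract d b w r x = (if x mod (d * b) div b = r then w (x div (d * b) * b + x mod b) else 0)"

lemma mixed_radix_digits:
  fixes q r' t d b :: nat
  assumes "r' < d" "t < b"
  shows "(q * (d * b) + (r' * b + t)) div (d * b) = q"
    and "(q * (d * b) + (r' * b + t)) mod (d * b) = r' * b + t"
    and "(q * (d * b) + (r' * b + t)) mod b = t"
    and "(r' * b + t) div b = r'"
    and "(r' * b + t) mod b = t"
proof -
  have lt: "r' * b + t < d * b" using assms by (simp add: mult_add_less_mult)
  show "(q * (d * b) + (r' * b + t)) div (d * b) = q"
    using lt by (metis add.commute div_mult_self1 div_less add_0 mult.commute mult_zero_right
        less_nat_zero_code neq0_conv)
  show "(q * (d * b) + (r' * b + t)) mod (d * b) = r' * b + t"
    using lt by simp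
  have "q * (d * b) + (r' * b + t) = t + (q * d + r') * b" by (simp add: algebra_simps)
  then show "(q * (d * b) + (r' * b + t)) mod b = t"
    using assms(2) by (simp only: mod_mult_self1) simp
  show "(r' * b + t) div b = r'" "(r' * b + t) mod b = t"
    using assms(2) by simp_all
qed

lemma slot_contract_digits:
  assumes "r' < d" "t < b"
  shows "slot_contract d b w r (q * (d * b) + (r' * b + t)) = (if r' = r then w (q * b + t) else 0)"
  unfolding slot_contract_def mixed_radix_digits[OF assms] ..

lemma tensor_vecs_middle_index:
  assumes "\<forall>v\<in>set A. dim_vec v = d" "\<forall>v\<in>set B. dim_vec v = d" "dim_vec p = d"
    and "q < d ^ length A" "r' < d" "t < d ^ length B"
  shows "tensor_vecs (A @ p # B) $ (q * (d * d ^ length B) + (r' * d ^ length B + t))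
    = p $ r' * tensor_vecs (A @ B) $ (q * d ^ length B + t)"
proof -
  define b where "b = d ^ length B"
  have dims: "dim_vec (tensor_vecs A) = d ^ length A" "dim_vec (tensor_vecs B) = b"
    "dim_vec (tensor_vecs (p # B)) = d * b"
    using assms(1-3) by (simp_all add: dim_tensor_vecs_uniform b_def kron_vec_def)
  have lt: "r' * b + t < d * b" "q * (d * b) + (r' * b + t) < d ^ length A * (d * b)"
    "q * b + t < d ^ length A * b"
    using assms(4-6) by (simp_all add: mult_add_less_mult b_def)
  have "tensor_vecs (A @ p # B) $ (q * (d * b) + (r' * b + t)) = tensor_vecs A $ q * (p $ r' * tensor_vecs B $ t)"
    using tensor_vecs_append[of _ A "p # B"] lt(1,2) dims assms(3) mixed_radix_digits(1,2)[OF assms(5,6), of q] mixed_radix_digits(4,5)[OF assms(5,6)]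
      assms(6) by (simp add: kron_vec_def b_def)
  moreover have "tensor_vecs (A @ B) $ (q * b + t) = tensor_vecs A $ q * tensor_vecs B $ t"
    using tensor_vecs_append[of _ A B] lt(3) dims assms(6) gr_implies_not0[OF assms(6)] by (simp add: b_def)
  ultimately show ?thesis by (simp add: b_def)
qed

lemma sum_slot_contract_tensor_vecs:
  assumes "\<forall>v\<in>set A. dim_vec v = d" "\<forall>v\<in>set B. dim_vec v = d" "dim_vec p = d" "r < d"
  shows "(\<Sum>x<d ^ length A * (d * d ^ length B). slot_contract d (d ^ length B) w r x * tensor_vecs (A @ p # B) $ x)
    = p $ r * (\<Sum>x<d ^ length A * d ^ length B. w x * tensor_vecs (A @ B) $ x)"
proof -
  define a where "a = d ^ length A"
  define b where "b = d ^ length B"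
  have summand: "slot_contract d b w r (q * (d * b) + (r' * b + t)) * tensor_vecs (A @ p # B) $ (q * (d * b) + (r' * b + t))
      = (if r' = r then p $ r * (w (q * b + t) * tensor_vecs (A @ B) $ (q * b + t)) else 0)"
    if "q < a" "r' < d" "t < b" for q r' t
    using that slot_contract_digits[of r' d t b w r q] tensor_vecs_middle_index[OF assms(1-3), of q r' t]
    by (simp add: a_def b_def)
  have "(\<Sum>x<a * (d * b). slot_contract d b w r x * tensor_vecs (A @ p # B) $ x)
      = (\<Sum>q<a. \<Sum>r'<d. \<Sum>t<b. if r' = r then p $ r * (w (q * b + t) * tensor_vecs (A @ B) $ (q * b + t)) else 0)"
    unfolding sum_lessThan_mult_nested by (intro sum.cong refl) (simp add: summand)
  also have "\<dots> = (\<Sum>q<a. \<Sum>t<b. p $ r * (w (q * b + t) * tensor_vecs (A @ B) $ (q * b + t)))"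
    using assms(4) by (simp only: sum_if_zero_const sum.delta finite_lessThan) simp
  also have "\<dots> = p $ r * (\<Sum>x<a * b. w x * tensor_vecs (A @ B) $ x)"
    by (simp add: sum_lessThan_mult_nested sum_distrib_left)
  finally show ?thesis unfolding a_def b_def .
qed

definition perm_bra :: "complex vec \<Rightarrow> nat \<Rightarrow> nat \<Rightarrow> (nat \<Rightarrow> nat) \<Rightarrow> nat \<Rightarrow> complex" where
  "perm_bra X d m g x = (\<Sum>y<d ^ m. cnj (X $ y) * perm_op d m g $$ (y, x))"

lemma braket_perm_op:
  assumes "dim_vec X = d ^ m" "dim_vec v = d ^ m"
  shows "braket X (perm_op d m g *\<^sub>v v) = (\<Sum>x<d ^ m. perm_bra X d m g x * v $ x)"
proof -
  have "braket X (perm_op d m g *\<^sub>v v) = (\<Sum>y<d ^ m. \<Sum>x<d ^ m. cnj (X $ y) * (perm_op d m g $$ (y, x) * v $ x))"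
    using assms by (simp add: braket_def perm_op_def scalar_prod_def lessThan_atLeast0 sum_distrib_left)
  also have "\<dots> = (\<Sum>x<d ^ m. \<Sum>y<d ^ m. cnj (X $ y) * perm_op d m g $$ (y, x) * v $ x)"
    by (subst sum.swap) (simp add: mult.assoc)
  finally show ?thesis
    by (simp add: perm_bra_def sum_distrib_right)
qed

lemma length_concat_replicate: "length (concat (map (\<lambda>i. replicate k (f i)) xs)) = k * length xs"
  by (induction xs) auto

lemma upt_split_at:
  assumes "j < n"
  shows "[0..<n] = [0..<j] @ j # [Suc j..<n]"
proof -
  have "[0..<n] = [0..<j + (n - j)]" using assms by simp
  also have "\<dots> = [0..<j] @ [j..<j + (n - j)]" by (rule upt_add_eq_append) simp
  also have "[j..<j + (n - j)] = j # [Suc j..<n]" using assms by (simp add: upt_conv_Cons)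
  finally show ?thesis .
qed

lemma concat_replicate_split_at:
  assumes "j < n" "k \<ge> 1"
  shows "concat (map (\<lambda>i. replicate k (\<psi> i)) [0..<n])
    = concat (map (\<lambda>i. replicate k (\<psi> i)) [0..<j]) @ \<psi> j
      # (replicate (k - 1) (\<psi> j) @ concat (map (\<lambda>i. replicate k (\<psi> i)) [Suc j..<n]))"
proof -
  have "replicate k (\<psi> j) = \<psi> j # replicate (k - 1) (\<psi> j)" using assms(2) by (cases k) auto
  then show ?thesis using upt_split_at[OF assms(1)] by simp
qed

lemma Psi_state_split_at:
  assumes "j < n"
  shows "Psi_state n k \<psi> j = tensor_vecs (concat (map (\<lambda>i. replicate k (\<psi> i)) [0..<j])
      @ (replicate (k - 1) (\<psi> j) @ concat (map (\<lambda>i. replicate k (\<psi> i)) [Suc j..<n])))"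
proof -
  have "map (\<lambda>t. replicate (if t = j then k - 1 else k) (\<psi> t)) [0..<j] = map (\<lambda>i. replicate k (\<psi> i)) [0..<j]"
    "map (\<lambda>t. replicate (if t = j then k - 1 else k) (\<psi> t)) [Suc j..<n] = map (\<lambda>i. replicate k (\<psi> i)) [Suc j..<n]"
    by (rule map_cong; simp)+
  then show ?thesis
    unfolding Psi_state_def upt_split_at[OF assms] by (simp only: map_append concat_append list.map) simp
qed

lemma sum_slot_contract_copies:
  assumes "k \<ge> 1" "j < n" "\<forall>t<n. dim_vec (\<psi> t) = d" "dim_vec X = d ^ (n * k - 1)" "r < d"
  shows "(\<Sum>x<d ^ (n * k). slot_contract d (d ^ (k - 1 + k * (n - Suc j))) (perm_bra X d (n * k - 1) g) r x
        * tensor_vecs (concat (map (\<lambda>i. replicate k (\<psi> i)) [0..<n])) $ x)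
    = \<psi> j $ r * braket X (perm_op d (n * k - 1) g *\<^sub>v Psi_state n k \<psi> j)"
proof -
  define A where "A = concat (map (\<lambda>i. replicate k (\<psi> i)) [0..<j])"
  define B where "B = replicate (k - 1) (\<psi> j) @ concat (map (\<lambda>i. replicate k (\<psi> i)) [Suc j..<n])"
  have copies: "concat (map (\<lambda>i. replicate k (\<psi> i)) [0..<n]) = A @ \<psi> j # B"
    unfolding A_def B_def by (rule concat_replicate_split_at[OF assms(2,1)])
  have Psi: "Psi_state n k \<psi> j = tensor_vecs (A @ B)"
    unfolding A_def B_def by (rule Psi_state_split_at[OF assms(2)])
  have dims: "\<forall>v\<in>set A. dim_vec v = d" "\<forall>v\<in>set B. dim_vec v = d" "dim_vec (\<psi> j) = d"
    using assms(2,3) by (auto simp: A_def B_def)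
  have "length (A @ \<psi> j # B) = k * n"
    unfolding copies[symmetric] by (simp add: length_concat_replicate)
  then have len: "length A + length B = n * k - 1" "length B = k - 1 + k * (n - Suc j)"
    by (simp_all add: B_def length_concat_replicate mult.commute)
  have "(\<Sum>x<d ^ (n * k). slot_contract d (d ^ (k - 1 + k * (n - Suc j))) (perm_bra X d (n * k - 1) g) r x
        * tensor_vecs (A @ \<psi> j # B) $ x)
      = \<psi> j $ r * (\<Sum>x<d ^ length A * d ^ length B. perm_bra X d (n * k - 1) g x * tensor_vecs (A @ B) $ x)"
  proof -
    have "d ^ (n * k) = d ^ length A * (d * d ^ length B)"
      using len(1) assms(1,2) by (simp flip: power_add power_Suc)
    then show ?thesis
      using sum_slot_contract_tensor_vecs[OF dims assms(5)] len(2) by simp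
  qed
  also have "\<dots> = \<psi> j $ r * braket X (perm_op d (n * k - 1) g *\<^sub>v Psi_state n k \<psi> j)"
    using braket_perm_op[OF assms(4)] dim_tensor_vecs_uniform[of "A @ B" d] dims len(1)
    by (simp add: Psi ball_Un flip: power_add)
  finally show ?thesis unfolding copies .
qed

text \<open>Input index \<open>i\<close> encodes \<open>(j, x)\<close> with \<open>i = j d\<^sup>n\<^sup>k + x\<close>; in branch \<open>j\<close> the first copy of \<open>\<psi>\<^sub>j\<close>
  is followed by \<open>k - 1 + k (n - j - 1)\<close> tensor factors.\<close>

definition superposer_kernel ::
    "nat \<Rightarrow> nat \<Rightarrow> nat \<Rightarrow> complex vec \<Rightarrow> (nat \<Rightarrow> nat \<Rightarrow> nat) \<Rightarrow> (nat \<Rightarrow> real) \<Rightarrow> nat \<Rightarrow> nat \<Rightarrow> complex" where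
  "superposer_kernel d n k X \<tau> c r i =
    (let j = i div d ^ (n * k)
     in slot_contract d (d ^ (k - 1 + k * (n - Suc j))) (perm_bra X d (n * k - 1) (\<tau> j)) r (i mod d ^ (n * k))
        / complex_of_real (sqrt (c j)))"

lemma superposer_kernel_apply:
  assumes "k \<ge> 1" "dim_vec \<mu> = n" "\<forall>t<n. dim_vec (\<psi> t) = d" "dim_vec X = d ^ (n * k - 1)" "r < d"
  shows "(\<Sum>i<n * d ^ (n * k). superposer_kernel d n k X \<tau> c r i
        * kron_vec \<mu> (tensor_vecs (concat (map (\<lambda>i. replicate k (\<psi> i)) [0..<n]))) $ i)
    = (\<Sum>j<n. \<mu> $ j * (braket X (perm_op d (n * k - 1) (\<tau> j) *\<^sub>v Psi_state n k \<psi> j)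
        / complex_of_real (sqrt (c j))) * \<psi> j $ r)"
proof -
  define T where "T = tensor_vecs (concat (map (\<lambda>i. replicate k (\<psi> i)) [0..<n]))"
  define D where "D = d ^ (n * k)"
  have "d > 0" using assms(5) by simp
  then have "D > 0" by (simp add: D_def)
  have dimT: "dim_vec T = D"
    using assms(3) dim_tensor_vecs_uniform[of _ d]
    by (auto simp: T_def D_def length_concat_replicate mult.commute)
  have "superposer_kernel d n k X \<tau> c r (j * D + x) * kron_vec \<mu> T $ (j * D + x)
      = \<mu> $ j / complex_of_real (sqrt (c j))
        * (slot_contract d (d ^ (k - 1 + k * (n - Suc j))) (perm_bra X d (n * k - 1) (\<tau> j)) r x * T $ x)"
    if "j < n" "x < D" for j x
    using that \<open>D > 0\<close> mult_add_less_mult[OF that] assms(2) dimT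
    by (simp add: superposer_kernel_def kron_vec_def D_def[symmetric])
  then have "(\<Sum>i<n * D. superposer_kernel d n k X \<tau> c r i * kron_vec \<mu> T $ i)
      = (\<Sum>j<n. \<mu> $ j / complex_of_real (sqrt (c j)) * (\<Sum>x<D.
          slot_contract d (d ^ (k - 1 + k * (n - Suc j))) (perm_bra X d (n * k - 1) (\<tau> j)) r x * T $ x))"
    unfolding sum_lessThan_mult_nested sum_distrib_left by (intro sum.cong refl) simp
  also have "\<dots> = (\<Sum>j<n. \<mu> $ j * (braket X (perm_op d (n * k - 1) (\<tau> j) *\<^sub>v Psi_state n k \<psi> j)
        / complex_of_real (sqrt (c j))) * \<psi> j $ r)"
    using sum_slot_contract_copies[OF assms(1) _ assms(3-5)]
    by (intro sum.cong refl) (simp add: T_def D_def)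
  finally show ?thesis by (simp add: T_def D_def)
qed

lemma kron_proj_tensor_copies:
  "kron_mat (proj \<mu>) (tensor_mats (concat (map (\<lambda>i. replicate k (proj (\<psi> i))) xs)))
    = proj (kron_vec \<mu> (tensor_vecs (concat (map (\<lambda>i. replicate k (\<psi> i)) xs))))"
proof -
  have "concat (map (\<lambda>i. replicate k (proj (\<psi> i))) xs) = map proj (concat (map (\<lambda>i. replicate k (\<psi> i)) xs))"
    by (simp add: map_concat o_def)
  then show ?thesis by (simp add: tensor_mats_map_proj kron_mat_proj)
qed

lemma index_finsum_vec_smult:
  assumes "finite A" "\<forall>j\<in>A. v j \<in> carrier_vec d" "i < d"
  shows "finsum_vec TYPE(complex) d (\<lambda>j. a j \<cdot>\<^sub>v v j) A $ i = (\<Sum>j\<in>A. a j * v j $ i)"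
  using assms by (subst index_finsum_vec) (auto intro!: sum.cong)

lemma superposer_output:
  fixes d n k :: nat and X \<mu> :: "complex vec" and \<psi> :: "nat \<Rightarrow> complex vec"
    and \<tau> :: "nat \<Rightarrow> nat \<Rightarrow> nat" and \<epsilon> :: real
  defines "z \<equiv> \<lambda>j. braket X (perm_op d (n * k - 1) (\<tau> j) *\<^sub>v Psi_state n k \<psi> j)"
  assumes dims: "k \<ge> 1" "dim_vec \<mu> = n" "\<forall>t<n. dim_vec (\<psi> t) = d" "dim_vec X = d ^ (n * k - 1)"
    and phases: "\<forall>j<n. cmod (z j) = sqrt (c j)"
  shows "kraus_map (n * d ^ (n * k)) d (\<lambda>r i. complex_of_real \<epsilon> * superposer_kernel d n k X \<tau> c r i)
      (kron_mat (proj \<mu>) (tensor_mats (concat (map (\<lambda>i. replicate k (proj (\<psi> i))) [0..<n]))))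
    = proj (complex_of_real \<epsilon> \<cdot>\<^sub>v
        finsum_vec TYPE(complex) d (\<lambda>j. (\<mu> $ j * (z j / complex_of_real (cmod (z j)))) \<cdot>\<^sub>v \<psi> j) {0..<n})"
proof -
  let ?u = "kron_vec \<mu> (tensor_vecs (concat (map (\<lambda>i. replicate k (\<psi> i)) [0..<n])))"
  have "dim_vec (tensor_vecs (concat (map (\<lambda>i. replicate k (\<psi> i)) [0..<n]))) = d ^ (n * k)"
    using dims(3) dim_tensor_vecs_uniform[of _ d] by (auto simp: length_concat_replicate mult.commute)
  then have dim_u: "dim_vec ?u = n * d ^ (n * k)"
    using dims(2) by (simp add: kron_vec_def)
  define s where
    "s = finsum_vec TYPE(complex) d (\<lambda>j. (\<mu> $ j * (z j / complex_of_real (cmod (z j)))) \<cdot>\<^sub>v \<psi> j) {0..<n}"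
  have s_carrier: "s \<in> carrier_vec d"
    unfolding s_def using dims(3) by (intro finsum_vec_closed) auto
  have kernel_output: "vec d (\<lambda>r. \<Sum>i<n * d ^ (n * k). complex_of_real \<epsilon> * superposer_kernel d n k X \<tau> c r i * ?u $ i)
      = complex_of_real \<epsilon> \<cdot>\<^sub>v s"
  proof (rule eq_vecI)
    fix r assume "r < dim_vec (complex_of_real \<epsilon> \<cdot>\<^sub>v s)"
    then have r: "r < d" using s_carrier by simp
    have "(\<Sum>i<n * d ^ (n * k). complex_of_real \<epsilon> * superposer_kernel d n k X \<tau> c r i * ?u $ i)
        = complex_of_real \<epsilon> * (\<Sum>i<n * d ^ (n * k). superposer_kernel d n k X \<tau> c r i * ?u $ i)"
      by (simp add: sum_distrib_left mult.assoc)
    also have "\<dots> = complex_of_real \<epsilon> * (\<Sum>j<n. \<mu> $ j * (z j / complex_of_real (sqrt (c j))) * \<psi> j $ r)"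
      unfolding superposer_kernel_apply[OF dims r] z_def ..
    also have "\<dots> = complex_of_real \<epsilon> * s $ r"
    proof -
      have "s $ r = (\<Sum>j\<in>{0..<n}. \<mu> $ j * (z j / complex_of_real (cmod (z j))) * \<psi> j $ r)"
        unfolding s_def using dims(3) r by (intro index_finsum_vec_smult) auto
      then show ?thesis
        using phases by (simp add: atLeast0LessThan)
    qed
    finally show "vec d (\<lambda>r. \<Sum>i<n * d ^ (n * k). complex_of_real \<epsilon> * superposer_kernel d n k X \<tau> c r i * ?u $ i) $ r
        = (complex_of_real \<epsilon> \<cdot>\<^sub>v s) $ r"
      using r s_carrier by simp
  qed (use s_carrier in simp)
  show ?thesis
    using dim_u kernel_output by (simp add: kron_proj_tensor_copies kraus_map_proj s_def)
qed

lemma proj_smult_normalized: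
  assumes "s \<in> carrier_vec d" "s \<noteq> 0\<^sub>v d"
  defines "N \<equiv> \<Sum>i<d. (cmod (s $ i))\<^sup>2"
  shows "N > 0"
    and "proj (a \<cdot>\<^sub>v s) = complex_of_real ((cmod a)\<^sup>2 * N) \<cdot>\<^sub>m proj ((1 / complex_of_real (sqrt N)) \<cdot>\<^sub>v s)"
proof -
  obtain i where "i < d" "s $ i \<noteq> 0"
    using assms(1,2) by (metis carrier_vecD eq_vecI index_zero_vec)
  then have "0 < (cmod (s $ i))\<^sup>2" by simp
  also have "\<dots> \<le> N" unfolding N_def using \<open>i < d\<close> by (intro member_le_sum) auto
  finally show "N > 0" .
  have "(1 / complex_of_real (sqrt N)) * cnj (1 / complex_of_real (sqrt N)) = 1 / complex_of_real (sqrt N * sqrt N)"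
    by (simp flip: of_real_mult)
  also have "sqrt N * sqrt N = N" using \<open>N > 0\<close> by simp
  finally have scale: "complex_of_real ((cmod a)\<^sup>2 * N) * ((1 / complex_of_real (sqrt N)) * cnj (1 / complex_of_real (sqrt N)))
      = a * cnj a"
    using \<open>N > 0\<close> by (simp flip: complex_norm_square)
  have smult_smult: "b \<cdot>\<^sub>m (b' \<cdot>\<^sub>m M) = (b * b') \<cdot>\<^sub>m M" for b b' :: complex and M
    by (rule eq_matI) auto
  show "proj (a \<cdot>\<^sub>v s) = complex_of_real ((cmod a)\<^sup>2 * N) \<cdot>\<^sub>m proj ((1 / complex_of_real (sqrt N)) \<cdot>\<^sub>v s)"
    unfolding proj_smult smult_smult scale ..
qed

lemma superposer_output_normalized:
  fixes d n k :: nat and X \<mu> :: "complex vec" and \<psi> :: "nat \<Rightarrow> complex vec"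
    and \<tau> :: "nat \<Rightarrow> nat \<Rightarrow> nat" and c :: "nat \<Rightarrow> real" and \<epsilon> :: real
  assumes "k \<ge> 1" "\<epsilon> > 0" "unit_vector (d ^ (n * k - 1)) X" "unit_vector n \<mu>" "\<forall>t<n. unit_vector d (\<psi> t)"
    and "\<forall>j<n. (cmod (braket X (perm_op d (n * k - 1) (\<tau> j) *\<^sub>v Psi_state n k \<psi> j)))\<^sup>2 = c j"
  shows "let z = (\<lambda>j. braket X (perm_op d (n * k - 1) (\<tau> j) *\<^sub>v Psi_state n k \<psi> j));
            s = finsum_vec TYPE(complex) d (\<lambda>j. (\<mu> $ j * (z j / complex_of_real (cmod (z j)))) \<cdot>\<^sub>v \<psi> j) {0..<n};
            \<phi> = (1 / complex_of_real (sqrt (\<Sum>i<d. (cmod (s $ i))\<^sup>2))) \<cdot>\<^sub>v s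
        in s \<noteq> 0\<^sub>v d \<longrightarrow>
           (\<exists>p > 0. kraus_map (n * d ^ (n * k)) d (\<lambda>r i. complex_of_real \<epsilon> * superposer_kernel d n k X \<tau> c r i)
                      (kron_mat (proj \<mu>) (tensor_mats (concat (map (\<lambda>i. replicate k (proj (\<psi> i))) [0..<n]))))
                     = complex_of_real p \<cdot>\<^sub>m proj \<phi>)"
proof -
  define z where "z = (\<lambda>j. braket X (perm_op d (n * k - 1) (\<tau> j) *\<^sub>v Psi_state n k \<psi> j))"
  define S where "S = finsum_vec TYPE(complex) d (\<lambda>j. (\<mu> $ j * (z j / complex_of_real (cmod (z j)))) \<cdot>\<^sub>v \<psi> j) {0..<n}"
  have dims: "dim_vec \<mu> = n" "\<forall>t<n. dim_vec (\<psi> t) = d" "dim_vec X = d ^ (n * k - 1)"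
    using assms(3-5) by (simp_all add: unit_vector_def)
  have "\<forall>j<n. cmod (z j) = sqrt (c j)"
    using assms(6) by (metis z_def real_sqrt_abs abs_norm_cancel)
  then have F_input: "kraus_map (n * d ^ (n * k)) d (\<lambda>r i. complex_of_real \<epsilon> * superposer_kernel d n k X \<tau> c r i)
      (kron_mat (proj \<mu>) (tensor_mats (concat (map (\<lambda>i. replicate k (proj (\<psi> i))) [0..<n]))))
      = proj (complex_of_real \<epsilon> \<cdot>\<^sub>v S)"
    using superposer_output[OF assms(1) dims] by (simp add: S_def z_def)
  have "S \<in> carrier_vec d"
    unfolding S_def using dims(2) by (intro finsum_vec_closed) auto
  then show ?thesis
    unfolding z_def[symmetric] Let_def S_def[symmetric]
    using F_input proj_smult_normalized(1)[where s = S]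
      proj_smult_normalized(2)[where s = S and a = "complex_of_real \<epsilon>"] assms(2)
    by (intro impI exI[of _ "\<epsilon>\<^sup>2 * (\<Sum>i<d. (cmod (S $ i))\<^sup>2)"]) simp
qed

theorem corollary4:
  fixes d n k :: nat and X :: "complex vec" and \<tau> :: "nat \<Rightarrow> nat \<Rightarrow> nat" and c :: "nat \<Rightarrow> real"
  assumes "d \<ge> 2" and "n \<ge> 2" and "k \<ge> 1"
    and "unit_vector (d ^ (n * k - 1)) X"
    and "\<forall>j<n. \<tau> j permutes {0..<n * k - 1}"
    and "\<forall>j<n. c j > 0"
  shows "\<exists>F. quantum_operation (n * d ^ (n * k)) d F \<and>
    (\<forall>(\<mu> :: complex vec) (\<psi> :: nat \<Rightarrow> complex vec).
       unit_vector n \<mu> \<longrightarrow> (\<forall>t<n. unit_vector d (\<psi> t)) \<longrightarrow>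
       (\<forall>j<n. (cmod (braket X (perm_op d (n * k - 1) (\<tau> j) *\<^sub>v Psi_state n k \<psi> j)))\<^sup>2 = c j) \<longrightarrow>
       (let z = (\<lambda>j. braket X (perm_op d (n * k - 1) (\<tau> j) *\<^sub>v Psi_state n k \<psi> j));
            s = finsum_vec TYPE(complex) d (\<lambda>j. (\<mu> $ j * (z j / complex_of_real (cmod (z j)))) \<cdot>\<^sub>v \<psi> j) {0..<n};
            \<phi> = (1 / complex_of_real (sqrt (\<Sum>i<d. (cmod (s $ i))\<^sup>2))) \<cdot>\<^sub>v s
        in s \<noteq> 0\<^sub>v d \<longrightarrow>
           (\<exists>p > 0. F (kron_mat (proj \<mu>) (tensor_mats (concat (map (\<lambda>i. replicate k (proj (\<psi> i))) [0..<n]))))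
                     = complex_of_real p \<cdot>\<^sub>m proj \<phi>)))"
proof -
  obtain \<epsilon> :: real where "\<epsilon> > 0" and bound:
    "(\<Sum>r<d. (\<Sum>i<n * d ^ (n * k). cmod (complex_of_real \<epsilon> * superposer_kernel d n k X \<tau> c r i))\<^sup>2) \<le> 1"
    using kraus_kernel_rescale by blast
  show ?thesis
    using quantum_operation_kraus_map[OF bound] superposer_output_normalized[OF assms(3) \<open>\<epsilon> > 0\<close> assms(4)]
    by blast
qed

end
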